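(* Let $k\ge 2$ and consider the cycle query $C_k=R_1(\underline{x_1},x_2),\dots,R_k(\underline{x_k},x_1)$ in which each $R_i$ is of consistent or inconsistent type. Then $\mathrm{CERTAINTY}(C_k)$ is first-order expressible if and only if at most one of $R_1,\dots,R_k$ is of inconsistent type.
   Context: Relations of consistent type satisfy their key constraint (first attribute) in every instance; relations of inconsistent type may violate it. A repair is a maximal subset of the instance satisfying all key constraints; $I\vDash C_k$ iff $C_k(r)$ is true for every repair $r$. $\mathrm{CERTAINTY}(C_k)$ is first-order expressible if there is a first-order sentence $\varphi$ over the schema such that for every instance $I$, $I\vDash C_k$ iff $I\models\varphi$. *)

theory Defs
  imports Main
begin

text \<open>Database instances over the schema R_0, ..., R_(k-1) (the paper's R_1..R_k),
  each relation binary with key = first attribute.\<close>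

type_synonym inst = "nat \<Rightarrow> (nat \<times> nat) set"

definition key_consistent :: "(nat \<times> nat) set \<Rightarrow> bool" where
  "key_consistent R \<longleftrightarrow> (\<forall>a b c. (a, b) \<in> R \<longrightarrow> (a, c) \<in> R \<longrightarrow> b = c)"

definition sub_inst :: "nat \<Rightarrow> inst \<Rightarrow> inst \<Rightarrow> bool" where
  "sub_inst k r I \<longleftrightarrow> (\<forall>i<k. r i \<subseteq> I i) \<and> (\<forall>i. k \<le> i \<longrightarrow> r i = {})"

definition consistent_inst :: "nat \<Rightarrow> inst \<Rightarrow> bool" where
  "consistent_inst k r \<longleftrightarrow> (\<forall>i<k. key_consistent (r i))"

definition repair :: "nat \<Rightarrow> inst \<Rightarrow> inst \<Rightarrow> bool" where
  "repair k I r \<longleftrightarrow> sub_inst k r I \<and> consistent_inst k r \<and>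
     (\<forall>r'. sub_inst k r' I \<longrightarrow> consistent_inst k r' \<longrightarrow> sub_inst k r r' \<longrightarrow> r' = r)"

text \<open>Legal instances: finite, only relations R_0..R_(k-1), and relations of consistent
  type (incons i = False) satisfy their key constraint. incons i = True means R_i is of
  inconsistent type.\<close>
definition legal_inst :: "nat \<Rightarrow> (nat \<Rightarrow> bool) \<Rightarrow> inst \<Rightarrow> bool" where
  "legal_inst k incons I \<longleftrightarrow> (\<forall>i<k. finite (I i)) \<and> (\<forall>i. k \<le> i \<longrightarrow> I i = {}) \<and>
     (\<forall>i<k. \<not> incons i \<longrightarrow> key_consistent (I i))"

text \<open>The cycle query C_k = R_1(x_1,x_2), ..., R_k(x_k,x_1), 0-indexed.\<close>
definition cycle_query :: "nat \<Rightarrow> inst \<Rightarrow> bool" where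
  "cycle_query k r \<longleftrightarrow> (\<exists>x :: nat \<Rightarrow> nat. \<forall>i<k. (x i, x (Suc i mod k)) \<in> r i)"

definition certain :: "nat \<Rightarrow> inst \<Rightarrow> bool" where
  "certain k I \<longleftrightarrow> (\<forall>r. repair k I r \<longrightarrow> cycle_query k r)"

datatype fo = Eq nat nat | Rel nat nat nat | Neg fo | Conj fo fo | Ex nat fo

fun fv :: "fo \<Rightarrow> nat set" where
  "fv (Eq x y) = {x, y}"
| "fv (Rel i x y) = {x, y}"
| "fv (Neg \<phi>) = fv \<phi>"
| "fv (Conj \<phi> \<psi>) = fv \<phi> \<union> fv \<psi>"
| "fv (Ex x \<phi>) = fv \<phi> - {x}"

fun rels :: "fo \<Rightarrow> nat set" where
  "rels (Eq x y) = {}"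
| "rels (Rel i x y) = {i}"
| "rels (Neg \<phi>) = rels \<phi>"
| "rels (Conj \<phi> \<psi>) = rels \<phi> \<union> rels \<psi>"
| "rels (Ex x \<phi>) = rels \<phi>"

text \<open>Active domain of an instance: the universe of the finite structure.\<close>
definition adom :: "nat \<Rightarrow> inst \<Rightarrow> nat set" where
  "adom k I = (\<Union>i<k. fst ` I i \<union> snd ` I i)"

fun sat :: "nat \<Rightarrow> inst \<Rightarrow> (nat \<Rightarrow> nat) \<Rightarrow> fo \<Rightarrow> bool" where
  "sat k I v (Eq x y) \<longleftrightarrow> v x = v y"
| "sat k I v (Rel i x y) \<longleftrightarrow> (v x, v y) \<in> I i"
| "sat k I v (Neg \<phi>) \<longleftrightarrow> \<not> sat k I v \<phi>"
| "sat k I v (Conj \<phi> \<psi>) \<longleftrightarrow> sat k I v \<phi> \<and> sat k I v \<psi>"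
| "sat k I v (Ex x \<phi>) \<longleftrightarrow> (\<exists>a\<in>adom k I. sat k I (v(x := a)) \<phi>)"

definition fo_sentence :: "nat \<Rightarrow> fo \<Rightarrow> bool" where
  "fo_sentence k \<phi> \<longleftrightarrow> fv \<phi> = {} \<and> rels \<phi> \<subseteq> {..<k}"

definition models :: "nat \<Rightarrow> inst \<Rightarrow> fo \<Rightarrow> bool" where
  "models k I \<phi> \<longleftrightarrow> sat k I (\<lambda>_. 0) \<phi>"

definition certainty_fo_expressible :: "nat \<Rightarrow> (nat \<Rightarrow> bool) \<Rightarrow> bool" where
  "certainty_fo_expressible k incons \<longleftrightarrow>
     (\<exists>\<phi>. fo_sentence k \<phi> \<and> (\<forall>I. legal_inst k incons I \<longrightarrow> (certain k I \<longleftrightarrow> models k I \<phi>)))"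

end

theory Submission
  imports Defs
begin

text \<open>If only \<open>R\<^sub>j\<close> may violate its key, every repair keeps all other relations, so
  \<open>C\<^sub>k\<close> is certain iff some key \<open>a\<close> of \<open>R\<^sub>j\<close> has all its \<open>R\<^sub>j\<close>-facts \<open>(a, b)\<close> closing a
  cycle through the remaining relations; this is a first-order condition.

  If \<open>R\<^sub>p\<close> and \<open>R\<^sub>q\<close> both may violate their keys, consider two "ladders" built from two
  long paths whose interior elements can step left or right using \<open>R\<^sub>p\<close>/\<open>R\<^sub>q\<close>. In the
  closed ladder one path has no endpoints, so every repair makes two neighbours point at each
  other, which yields a cycle; in the open ladder each path has one endpoint and the repair
  walking towards it has no cycle. For paths much longer than \<open>2\<^sup>n\<close> the two ladders satisfy
  the same sentences of quantifier depth \<open>n\<close>, by the usual Ehrenfeucht-Fraisse argument for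
  linear orders, so no sentence expresses certainty.\<close>

section \<open>Repairs\<close>

lemma repair_keeps_every_key:
  assumes R: "repair k I r" and ik: "i < k"
  shows "fst ` I i \<subseteq> fst ` r i"
proof
  have s: "sub_inst k r I" and c: "consistent_inst k r"
    and m: "\<And>r'. sub_inst k r' I \<Longrightarrow> consistent_inst k r' \<Longrightarrow> sub_inst k r r' \<Longrightarrow> r' = r"
    using R unfolding repair_def by blast+
  fix a assume "a \<in> fst ` I i"
  then obtain c0 where ac: "(a, c0) \<in> I i" by force
  show "a \<in> fst ` r i"
  proof (rule ccontr)
    assume na: "a \<notin> fst ` r i"
    define r' where "r' = r(i := insert (a, c0) (r i))"
    have "sub_inst k r' I" using s ac ik unfolding sub_inst_def r'_def by auto
    moreover have "consistent_inst k r'"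
      using c na unfolding consistent_inst_def key_consistent_def r'_def
      by (auto simp: image_iff)
    moreover have "sub_inst k r r'" using s ik unfolding sub_inst_def r'_def by auto
    ultimately have "r' = r" by (rule m)
    hence "(a, c0) \<in> r i" unfolding r'_def by (metis fun_upd_same insertI1)
    thus False using na by force
  qed
qed

lemma repairI:
  assumes s: "sub_inst k r I" and c: "consistent_inst k r"
    and keys: "\<forall>i<k. fst ` I i \<subseteq> fst ` r i"
  shows "repair k I r"
proof -
  have "r' i = r i" if s': "sub_inst k r' I" and c': "consistent_inst k r'"
    and rr: "sub_inst k r r'" and ik: "i < k" for r' i
  proof
    show "r i \<subseteq> r' i" using rr ik unfolding sub_inst_def by blast
    show "r' i \<subseteq> r i"
    proof
      fix x assume x: "x \<in> r' i"
      obtain a c0 where xe: "x = (a, c0)" by force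
      have "a \<in> fst ` I i" using x xe s' ik unfolding sub_inst_def by force
      then obtain b where ab: "(a, b) \<in> r i" using keys ik by force
      hence "(a, b) \<in> r' i" using rr ik unfolding sub_inst_def by blast
      hence "b = c0" using c' x xe ik unfolding consistent_inst_def key_consistent_def by blast
      thus "x \<in> r i" using ab xe by simp
    qed
  qed
  moreover have "r' i = r i" if "sub_inst k r' I" "\<not> i < k" for r' i
    using that s unfolding sub_inst_def by simp
  ultimately show "repair k I r" unfolding repair_def using s c by blast
qed

lemma repair_iff:
  "repair k I r \<longleftrightarrow> sub_inst k r I \<and> consistent_inst k r \<and> (\<forall>i<k. fst ` I i \<subseteq> fst ` r i)"
proof
  assume R: "repair k I r"
  hence "sub_inst k r I" "consistent_inst k r" unfolding repair_def by blast+
  thus "sub_inst k r I \<and> consistent_inst k r \<and> (\<forall>i<k. fst ` I i \<subseteq> fst ` r i)"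
    using repair_keeps_every_key[OF R] by blast
qed (blast intro: repairI)

lemma repair_keeps_consistent_relation:
  assumes "repair k I r" "i < k" "key_consistent (I i)"
  shows "r i = I i"
proof -
  have s: "r i \<subseteq> I i" and f: "fst ` I i \<subseteq> fst ` r i"
    using assms unfolding repair_iff sub_inst_def by blast+
  have "I i \<subseteq> r i"
  proof
    fix x assume x: "x \<in> I i"
    obtain a c0 where xe: "x = (a, c0)" by force
    obtain b where ab: "(a, b) \<in> r i" using f x xe by force
    hence "b = c0" using s x xe assms(3) unfolding key_consistent_def by blast
    thus "x \<in> r i" using ab xe by simp
  qed
  thus ?thesis using s by blast
qed

lemma adomI_fst: "i < k \<Longrightarrow> (a, b) \<in> I i \<Longrightarrow> a \<in> adom k I"
  unfolding adom_def by force

lemma adomI_snd: "i < k \<Longrightarrow> (a, b) \<in> I i \<Longrightarrow> b \<in> adom k I"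
  unfolding adom_def by force

section \<open>At most one inconsistent relation: a first-order rewriting\<close>

definition closes_cycle :: "nat \<Rightarrow> nat \<Rightarrow> inst \<Rightarrow> nat \<Rightarrow> nat \<Rightarrow> bool" where
  "closes_cycle k j I a b \<longleftrightarrow> (\<exists>x. x j = a \<and> x (Suc j mod k) = b \<and>
     (\<forall>i<k. i \<noteq> j \<longrightarrow> (x i, x (Suc i mod k)) \<in> I i))"

definition certain_key :: "nat \<Rightarrow> nat \<Rightarrow> inst \<Rightarrow> bool" where
  "certain_key k j I \<longleftrightarrow> (\<exists>a. (\<exists>b. (a, b) \<in> I j) \<and> (\<forall>b. (a, b) \<in> I j \<longrightarrow> closes_cycle k j I a b))"

lemma certain_if_certain_key:
  assumes jk: "j < k" and cons: "\<forall>i<k. i \<noteq> j \<longrightarrow> key_consistent (I i)"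
    and key: "certain_key k j I"
  shows "certain k I"
  unfolding certain_def
proof (intro allI impI)
  obtain a where a1: "\<exists>b. (a, b) \<in> I j" and a2: "\<forall>b. (a, b) \<in> I j \<longrightarrow> closes_cycle k j I a b"
    using key unfolding certain_key_def by blast
  fix r assume R: "repair k I r"
  have s: "r j \<subseteq> I j" and f: "fst ` I j \<subseteq> fst ` r j"
    using R jk unfolding repair_iff sub_inst_def by blast+
  obtain b where ab: "(a, b) \<in> r j" using f a1 by force
  then obtain x where x1: "x j = a" and x2: "x (Suc j mod k) = b"
    and x3: "\<forall>i<k. i \<noteq> j \<longrightarrow> (x i, x (Suc i mod k)) \<in> I i"
    using a2 s unfolding closes_cycle_def by blast
  have "(x i, x (Suc i mod k)) \<in> r i" if ik: "i < k" for i
    using ab x1 x2 x3 ik repair_keeps_consistent_relation[OF R ik] cons by (cases "i = j") auto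
  thus "cycle_query k r" unfolding cycle_query_def by blast
qed

lemma certain_key_if_certain:
  assumes jk: "j < k" and cons: "\<forall>i<k. i \<noteq> j \<longrightarrow> key_consistent (I i)"
    and emp: "\<forall>i. k \<le> i \<longrightarrow> I i = {}" and C: "certain k I"
  shows "certain_key k j I"
proof (rule ccontr)
  assume NG: "\<not> certain_key k j I"
  define bad where "bad a = (SOME b. (a, b) \<in> I j \<and> \<not> closes_cycle k j I a b)" for a
  have badp: "(a, bad a) \<in> I j \<and> \<not> closes_cycle k j I a (bad a)" if "a \<in> fst ` I j" for a
  proof -
    have "\<exists>b. (a, b) \<in> I j \<and> \<not> closes_cycle k j I a b"
      using NG that unfolding certain_key_def by force
    thus ?thesis unfolding bad_def by (rule someI_ex)
  qed
  define r where "r = I(j := {(a, bad a) | a. a \<in> fst ` I j})"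
  have "repair k I r"
  proof (rule repairI)
    show "sub_inst k r I" unfolding sub_inst_def r_def using badp emp jk by auto
    show "consistent_inst k r" unfolding consistent_inst_def r_def using cons
      by (auto simp: key_consistent_def)
    show "\<forall>i<k. fst ` I i \<subseteq> fst ` r i"
    proof (intro allI impI subsetI)
      fix i a assume "i < k" "a \<in> fst ` I i"
      thus "a \<in> fst ` r i" by (cases "i = j") (auto simp: r_def image_iff)
    qed
  qed
  then obtain x where x: "\<forall>i<k. (x i, x (Suc i mod k)) \<in> r i"
    using C unfolding certain_def cycle_query_def by blast
  hence "(x j, x (Suc j mod k)) \<in> r j" using jk by blast
  then obtain a where aI: "a \<in> fst ` I j" and xa: "x j = a" and xb: "x (Suc j mod k) = bad a"
    unfolding r_def by auto
  have "closes_cycle k j I a (bad a)" unfolding closes_cycle_def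
    using xa xb x unfolding r_def by (intro exI[of _ x]) auto
  thus False using badp[OF aI] by blast
qed

fun ex_list :: "nat list \<Rightarrow> fo \<Rightarrow> fo" where
  "ex_list [] \<phi> = \<phi>"
| "ex_list (x # xs) \<phi> = Ex x (ex_list xs \<phi>)"

fun conj_list :: "fo list \<Rightarrow> fo" where
  "conj_list [] = Eq 0 0"
| "conj_list (\<phi> # \<phi>s) = Conj \<phi> (conj_list \<phi>s)"

lemma sat_conj_list: "sat k I v (conj_list \<phi>s) \<longleftrightarrow> (\<forall>\<phi>\<in>set \<phi>s. sat k I v \<phi>)"
  by (induction \<phi>s) auto

lemma fv_conj_list: "fv (conj_list \<phi>s) \<subseteq> insert 0 (\<Union>\<phi>\<in>set \<phi>s. fv \<phi>)"
  by (induction \<phi>s) auto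

lemma rels_conj_list: "rels (conj_list \<phi>s) = (\<Union>\<phi>\<in>set \<phi>s. rels \<phi>)"
  by (induction \<phi>s) auto

lemma fv_ex_list: "fv (ex_list xs \<phi>) = fv \<phi> - set xs"
  by (induction xs) auto

lemma rels_ex_list: "rels (ex_list xs \<phi>) = rels \<phi>"
  by (induction xs) auto

lemma sat_ex_list: "sat k I v (ex_list xs \<phi>) \<longleftrightarrow>
  (\<exists>w. (\<forall>y\<in>set xs. w y \<in> adom k I) \<and> (\<forall>y. y \<notin> set xs \<longrightarrow> w y = v y) \<and> sat k I w \<phi>)"
proof (induction xs arbitrary: v)
  case Nil
  have "(\<forall>y. w y = v y) \<longleftrightarrow> w = v" for w :: "nat \<Rightarrow> nat" by (auto simp: fun_eq_iff)
  thus ?case by auto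
next
  case (Cons z zs)
  show ?case
  proof
    assume "sat k I v (ex_list (z # zs) \<phi>)"
    then obtain a where a: "a \<in> adom k I" and "sat k I (v(z := a)) (ex_list zs \<phi>)" by auto
    then obtain w where w1: "\<forall>y\<in>set zs. w y \<in> adom k I"
      and w2: "\<forall>y. y \<notin> set zs \<longrightarrow> w y = (v(z := a)) y" and w3: "sat k I w \<phi>"
      using Cons.IH by blast
    have "\<forall>y\<in>set (z # zs). w y \<in> adom k I" using w1 w2 a by (metis fun_upd_same set_ConsD)
    moreover have "\<forall>y. y \<notin> set (z # zs) \<longrightarrow> w y = v y" using w2 by auto
    ultimately show "\<exists>w. (\<forall>y\<in>set (z # zs). w y \<in> adom k I) \<and>
        (\<forall>y. y \<notin> set (z # zs) \<longrightarrow> w y = v y) \<and> sat k I w \<phi>"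
      using w3 by blast
  next
    assume "\<exists>w. (\<forall>y\<in>set (z # zs). w y \<in> adom k I) \<and>
        (\<forall>y. y \<notin> set (z # zs) \<longrightarrow> w y = v y) \<and> sat k I w \<phi>"
    then obtain w where w1: "\<forall>y\<in>set (z # zs). w y \<in> adom k I"
      and w2: "\<forall>y. y \<notin> set (z # zs) \<longrightarrow> w y = v y" and w3: "sat k I w \<phi>" by blast
    have "sat k I (v(z := w z)) (ex_list zs \<phi>)"
      using w1 w2 w3 by (intro iffD2[OF Cons.IH] exI[of _ w]) auto
    thus "sat k I v (ex_list (z # zs) \<phi>)" using w1 by auto
  qed
qed

text \<open>The sentence below says: some key \<open>a\<close> of \<open>R\<^sub>j\<close> exists and no \<open>R\<^sub>j\<close>-fact \<open>(a, b)\<close>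
  fails to close a cycle; the variable \<open>i\<close> stands for the paper's \<open>x\<^sub>i\<^sub>+\<^sub>1\<close>.\<close>

definition closing_formula :: "nat \<Rightarrow> nat \<Rightarrow> fo" where
  "closing_formula k j = ex_list (filter (\<lambda>i. i \<noteq> j \<and> i \<noteq> Suc j mod k) [0..<k])
     (conj_list (map (\<lambda>i. Rel i i (Suc i mod k)) (filter (\<lambda>i. i \<noteq> j) [0..<k])))"

definition certainty_formula :: "nat \<Rightarrow> nat \<Rightarrow> fo" where
  "certainty_formula k j = Ex j (Conj (Ex (Suc j mod k) (Rel j j (Suc j mod k)))
     (Neg (Ex (Suc j mod k) (Conj (Rel j j (Suc j mod k)) (Neg (closing_formula k j))))))"

lemma sat_closing_formula:
  assumes jk: "j < k" and uj: "u j = a" and uj1: "u (Suc j mod k) = b"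
  shows "sat k I u (closing_formula k j) \<longleftrightarrow> closes_cycle k j I a b"
proof -
  let ?xs = "filter (\<lambda>i. i \<noteq> j \<and> i \<noteq> Suc j mod k) [0..<k]"
  have body: "sat k I w (conj_list (map (\<lambda>i. Rel i i (Suc i mod k)) (filter (\<lambda>i. i \<noteq> j) [0..<k])))
      \<longleftrightarrow> (\<forall>i<k. i \<noteq> j \<longrightarrow> (w i, w (Suc i mod k)) \<in> I i)" for w
    by (auto simp: sat_conj_list)
  show ?thesis
  proof
    assume "sat k I u (closing_formula k j)"
    then obtain w where "\<forall>y. y \<notin> set ?xs \<longrightarrow> w y = u y" "\<forall>i<k. i \<noteq> j \<longrightarrow> (w i, w (Suc i mod k)) \<in> I i"
      unfolding closing_formula_def sat_ex_list body by blast
    thus "closes_cycle k j I a b" unfolding closes_cycle_def using uj uj1 by (intro exI[of _ w]) auto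
  next
    assume "closes_cycle k j I a b"
    then obtain x where x1: "x j = a" and x2: "x (Suc j mod k) = b"
      and x3: "\<forall>i<k. i \<noteq> j \<longrightarrow> (x i, x (Suc i mod k)) \<in> I i" unfolding closes_cycle_def by blast
    define w where "w y = (if y \<in> set ?xs then x y else u y)" for y
    have wi: "w i = x i" if "i < k" for i
      using that x1 x2 uj uj1 unfolding w_def by auto
    have "w y \<in> adom k I" if "y \<in> set ?xs" for y
    proof -
      have "y < k" "y \<noteq> j" using that by auto
      thus ?thesis using x3 wi adomI_fst by metis
    qed
    moreover have "\<forall>i<k. i \<noteq> j \<longrightarrow> (w i, w (Suc i mod k)) \<in> I i"
      using x3 wi jk by simp
    ultimately show "sat k I u (closing_formula k j)"
      unfolding closing_formula_def sat_ex_list body by (intro exI[of _ w]) (auto simp: w_def)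
  qed
qed

lemma succ_mod_neq:
  assumes "j < k" "2 \<le> k"
  shows "j \<noteq> Suc j mod k"
  using assms by (cases "Suc j < k") (auto simp: mod_if)

lemma models_certainty_formula:
  assumes jk: "j < k" and k2: "2 \<le> k"
  shows "models k I (certainty_formula k j) \<longleftrightarrow> certain_key k j I"
proof -
  have "models k I (certainty_formula k j) \<longleftrightarrow> (\<exists>a\<in>adom k I. (\<exists>b\<in>adom k I. (a, b) \<in> I j) \<and>
     \<not>(\<exists>b\<in>adom k I. (a, b) \<in> I j \<and> \<not> closes_cycle k j I a b))"
    unfolding models_def certainty_formula_def using succ_mod_neq[OF jk k2]
    by (simp add: sat_closing_formula[OF jk])
  also have "\<dots> \<longleftrightarrow> certain_key k j I"
    unfolding certain_key_def using adomI_fst[OF jk] adomI_snd[OF jk] by blast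
  finally show ?thesis .
qed

lemma fo_sentence_certainty_formula:
  assumes jk: "j < k"
  shows "fo_sentence k (certainty_formula k j)"
proof -
  let ?L = "map (\<lambda>i. Rel i i (Suc i mod k)) (filter (\<lambda>i. i \<noteq> j) [0..<k])"
  have k0: "0 < k" using jk by simp
  have "fv (conj_list ?L) \<subseteq> insert 0 (\<Union>\<phi>\<in>set ?L. fv \<phi>)" by (rule fv_conj_list)
  also have "\<dots> \<subseteq> {..<k}" using k0 by auto
  finally have "fv (closing_formula k j) \<subseteq> {j, Suc j mod k}"
    unfolding closing_formula_def fv_ex_list by auto
  moreover have "rels (closing_formula k j) \<subseteq> {..<k}"
    unfolding closing_formula_def rels_ex_list rels_conj_list by auto
  ultimately show ?thesis
    unfolding fo_sentence_def certainty_formula_def using jk by auto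
qed

lemma certainty_fo_expressible_one_inconsistent:
  assumes k2: "2 \<le> k" and jk: "j < k" and others: "\<forall>i<k. i \<noteq> j \<longrightarrow> \<not> incons i"
  shows "certainty_fo_expressible k incons"
  unfolding certainty_fo_expressible_def
proof (intro exI conjI allI impI)
  show "fo_sentence k (certainty_formula k j)" using fo_sentence_certainty_formula[OF jk] .
  fix I assume L: "legal_inst k incons I"
  hence cons: "\<forall>i<k. i \<noteq> j \<longrightarrow> key_consistent (I i)" and emp: "\<forall>i. k \<le> i \<longrightarrow> I i = {}"
    using others unfolding legal_inst_def by blast+
  have "certain k I \<longleftrightarrow> certain_key k j I"
    using certain_if_certain_key[OF jk cons] certain_key_if_certain[OF jk cons emp] by blast
  thus "certain k I \<longleftrightarrow> models k I (certainty_formula k j)"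
    using models_certainty_formula[OF jk k2] by simp
qed

section \<open>Back-and-forth systems\<close>

fun qdepth :: "fo \<Rightarrow> nat" where
  "qdepth (Eq x y) = 0"
| "qdepth (Rel i x y) = 0"
| "qdepth (Neg \<phi>) = qdepth \<phi>"
| "qdepth (Conj \<phi> \<psi>) = max (qdepth \<phi>) (qdepth \<psi>)"
| "qdepth (Ex x \<phi>) = Suc (qdepth \<phi>)"

text \<open>Ehrenfeucht-Fraisse: \<open>P m v w X\<close> is a winning position for the duplicator with \<open>m\<close>
  rounds left, pebbles on the variables \<open>X\<close> placed by \<open>v\<close> in \<open>I\<close> and by \<open>w\<close> in \<open>J\<close>.\<close>

lemma sat_iff_back_and_forth:
  assumes atom: "\<And>m v w X x y. P m v w X \<Longrightarrow> x \<in> X \<Longrightarrow> y \<in> X \<Longrightarrow>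
      (v x = v y \<longleftrightarrow> w x = w y) \<and> (\<forall>i. (v x, v y) \<in> I i \<longleftrightarrow> (w x, w y) \<in> J i)"
    and forth_step: "\<And>m v w X x a. P (Suc m) v w X \<Longrightarrow> a \<in> adom k I \<Longrightarrow>
      \<exists>b\<in>adom k J. P m (v(x := a)) (w(x := b)) (insert x X)"
    and back_step: "\<And>m v w X x b. P (Suc m) v w X \<Longrightarrow> b \<in> adom k J \<Longrightarrow>
      \<exists>a\<in>adom k I. P m (v(x := a)) (w(x := b)) (insert x X)"
  shows "P m v w X \<Longrightarrow> qdepth \<phi> \<le> m \<Longrightarrow> fv \<phi> \<subseteq> X \<Longrightarrow> sat k I v \<phi> \<longleftrightarrow> sat k J w \<phi>"
proof (induction \<phi> arbitrary: m v w X)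
  case (Eq x y)
  thus ?case using atom[of m v w X x y] by simp
next
  case (Rel i x y)
  thus ?case using atom[of m v w X x y] by simp
next
  case (Ex x \<phi>)
  obtain m' where m: "m = Suc m'" using Ex.prems(2) by (cases m) auto
  have q: "qdepth \<phi> \<le> m'" and f: "fv \<phi> \<subseteq> insert x X" and P: "P (Suc m') v w X"
    using Ex.prems m by auto
  show ?case
  proof
    assume "sat k I v (Ex x \<phi>)"
    then obtain a where a: "a \<in> adom k I" and s: "sat k I (v(x := a)) \<phi>" by auto
    obtain b where b: "b \<in> adom k J" and Pb: "P m' (v(x := a)) (w(x := b)) (insert x X)"
      using forth_step[OF P a] by blast
    have "sat k J (w(x := b)) \<phi>" using Ex.IH[OF Pb q f] s by blast
    thus "sat k J w (Ex x \<phi>)" using b by auto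
  next
    assume "sat k J w (Ex x \<phi>)"
    then obtain b where b: "b \<in> adom k J" and s: "sat k J (w(x := b)) \<phi>" by auto
    obtain a where a: "a \<in> adom k I" and Pa: "P m' (v(x := a)) (w(x := b)) (insert x X)"
      using back_step[OF P b] by blast
    have "sat k I (v(x := a)) \<phi>" using Ex.IH[OF Pa q f] s by blast
    thus "sat k I v (Ex x \<phi>)" using a by auto
  qed
qed simp_all

section \<open>Two inconsistent relations: ladders\<close>

text \<open>A ladder has two lanes \<open>c \<in> {0, 1}\<close>, each a path on the positions \<open>0..N\<close>; the element
  \<open>2 * t + c\<close> sits at position \<open>t\<close> of lane \<open>c\<close>. Interior positions are always present, the
  endpoints of lane \<open>c\<close> only if \<open>lend c\<close> resp. \<open>rend c\<close>. Every interior element has an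
  \<open>R\<^sub>p\<close>-fact (even position) or \<open>R\<^sub>q\<close>-fact (odd position) towards each present neighbour;
  all other relations are the identity on present elements.\<close>

definition pos :: "nat \<Rightarrow> nat" where "pos e = e div 2"
definition lane :: "nat \<Rightarrow> nat" where "lane e = e mod 2"

lemma pos_lane_eq_iff: "a = b \<longleftrightarrow> pos a = pos b \<and> lane a = lane b"
  unfolding pos_def lane_def by (metis div_mult_mod_eq)

lemma lane_less_2: "lane e < 2" unfolding lane_def by simp

lemma lane_cases: "lane e = 0 \<or> lane e = 1" unfolding lane_def by auto

lemma pos_element [simp]: "c < 2 \<Longrightarrow> pos (2 * t + c) = t" unfolding pos_def by simp
lemma lane_element [simp]: "c < 2 \<Longrightarrow> lane (2 * t + c) = c" unfolding lane_def by simp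

lemma pos_double [simp]: "pos (2 * t) = t" and lane_double [simp]: "lane (2 * t) = 0"
  using pos_element[of 0 t] lane_element[of 0 t] by simp_all

lemma pos_Suc_Suc [simp]: "pos (Suc (Suc e)) = Suc (pos e)"
  and lane_Suc_Suc [simp]: "lane (Suc (Suc e)) = lane e"
  unfolding pos_def lane_def by auto

lemma pos_sub_2: "1 \<le> pos e \<Longrightarrow> pos (e - 2) = pos e - 1 \<and> lane (e - 2) = lane e"
  unfolding pos_def lane_def by (auto simp: div_le_mono le_div_geq le_mod_geq)

definition present :: "nat \<Rightarrow> (nat \<Rightarrow> bool) \<Rightarrow> (nat \<Rightarrow> bool) \<Rightarrow> nat \<Rightarrow> bool" where
  "present N lend rend e \<longleftrightarrow> pos e \<le> N \<and>
     ((1 \<le> pos e \<and> pos e < N) \<or> (pos e = 0 \<and> lend (lane e)) \<or> (pos e = N \<and> rend (lane e)))"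

definition alive :: "nat \<Rightarrow> nat \<Rightarrow> bool" where
  "alive N e \<longleftrightarrow> 1 \<le> pos e \<and> pos e < N"

definition ladder_edge :: "nat \<Rightarrow> (nat \<Rightarrow> bool) \<Rightarrow> (nat \<Rightarrow> bool) \<Rightarrow> nat \<Rightarrow> nat \<Rightarrow> bool" where
  "ladder_edge N lend rend e e' \<longleftrightarrow> alive N e \<and> present N lend rend e' \<and> lane e = lane e' \<and>
     (pos e' = Suc (pos e) \<or> pos e = Suc (pos e'))"

definition ladder :: "nat \<Rightarrow> nat \<Rightarrow> nat \<Rightarrow> nat \<Rightarrow> (nat \<Rightarrow> bool) \<Rightarrow> (nat \<Rightarrow> bool) \<Rightarrow> inst" where
  "ladder k p q N lend rend = (\<lambda>i. if i = p then {(e, e'). ladder_edge N lend rend e e' \<and> even (pos e)}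
     else if i = q then {(e, e'). ladder_edge N lend rend e e' \<and> odd (pos e)}
     else if i < k then {(e, e'). e' = e \<and> present N lend rend e} else {})"

lemma ladder_mem: "(a, a') \<in> ladder k p q N lend rend i \<longleftrightarrow>
  (if i = p then ladder_edge N lend rend a a' \<and> even (pos a)
   else if i = q then ladder_edge N lend rend a a' \<and> odd (pos a)
   else if i < k then a' = a \<and> present N lend rend a else False)"
  unfolding ladder_def by simp

lemma alive_present: "alive N e \<Longrightarrow> present N lend rend e"
  unfolding alive_def present_def by simp

lemma present_le: "present N lend rend e \<Longrightarrow> e \<le> 2 * N + 1"
  unfolding present_def pos_def by linarith

lemma ladder_edge_present:
  "ladder_edge N lend rend e e' \<Longrightarrow> present N lend rend e \<and> present N lend rend e'"
  unfolding ladder_edge_def using alive_present by blast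

lemma ladder_edge_mem:
  assumes "ladder_edge N lend rend e e'" "p \<noteq> q"
  shows "(e, e') \<in> ladder k p q N lend rend (if even (pos e) then p else q)"
  using assms unfolding ladder_mem by auto

lemma ladder_edge_left:
  assumes "alive N e" "present N lend rend (e - 2)"
  shows "ladder_edge N lend rend e (e - 2)"
  using assms pos_sub_2[of e] unfolding ladder_edge_def alive_def by auto

lemma ladder_edge_right:
  assumes "alive N e" "present N lend rend (e + 2)"
  shows "ladder_edge N lend rend e (e + 2)"
  using assms unfolding ladder_edge_def by simp

lemma alive_has_ladder_edge:
  assumes "alive N e" "3 \<le> N"
  shows "\<exists>e'. ladder_edge N lend rend e e'"
proof (cases "Suc (pos e) < N")
  case True
  hence "present N lend rend (e + 2)" unfolding present_def by simp
  thus ?thesis using assms ladder_edge_right by blast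
next
  case False
  hence "present N lend rend (e - 2)"
    using assms pos_sub_2[of e] unfolding alive_def present_def by auto
  thus ?thesis using assms ladder_edge_left by blast
qed

lemma adom_ladder:
  assumes pk: "p < k" and qk: "q < k" and pq: "p \<noteq> q" and N3: "3 \<le> N"
  shows "adom k (ladder k p q N lend rend) = {e. present N lend rend e}"
proof
  show "adom k (ladder k p q N lend rend) \<subseteq> {e. present N lend rend e}"
  proof
    fix e assume "e \<in> adom k (ladder k p q N lend rend)"
    then obtain i e' where "i < k"
      "(e, e') \<in> ladder k p q N lend rend i \<or> (e', e) \<in> ladder k p q N lend rend i"
      unfolding adom_def by force
    thus "e \<in> {e. present N lend rend e}"
      unfolding ladder_mem using ladder_edge_present by (auto split: if_splits)
  qed
next
  let ?I = "ladder k p q N lend rend"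
  let ?j = "\<lambda>e. if even (pos e) then p else q"
  have jk: "?j e < k" for e using pk qk by simp
  show "{e. present N lend rend e} \<subseteq> adom k ?I"
  proof
    fix e assume "e \<in> {e. present N lend rend e}"
    hence pe: "present N lend rend e" by simp
    consider "alive N e" | "pos e = 0" | "pos e = N"
      using pe unfolding present_def alive_def by linarith
    thus "e \<in> adom k ?I"
    proof cases
      case 1
      then obtain e' where "ladder_edge N lend rend e e'" using alive_has_ladder_edge N3 by blast
      thus ?thesis using ladder_edge_mem[OF _ pq] adomI_fst[OF jk] by blast
    next
      case 2
      have "alive N (e + 2)" unfolding alive_def using 2 N3 by simp
      hence "ladder_edge N lend rend (e + 2) e" using pe 2 by (simp add: ladder_edge_def)
      thus ?thesis using ladder_edge_mem[OF _ pq] adomI_snd[OF jk] by blast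
    next
      case 3
      have "alive N (e - 2)" unfolding alive_def using 3 N3 pos_sub_2[of e] by simp
      hence "ladder_edge N lend rend (e - 2) e"
        using pe 3 N3 pos_sub_2[of e] by (simp add: ladder_edge_def)
      thus ?thesis using ladder_edge_mem[OF _ pq] adomI_snd[OF jk] by blast
    qed
  qed
qed

lemma legal_inst_ladder:
  assumes "p < k" "q < k" "p \<noteq> q" "incons p" "incons q"
  shows "legal_inst k incons (ladder k p q N lend rend)"
  unfolding legal_inst_def
proof (intro conjI allI impI)
  fix i
  have "ladder k p q N lend rend i \<subseteq> {..2*N+1} \<times> {..2*N+1}"
  proof
    fix x assume x: "x \<in> ladder k p q N lend rend i"
    obtain a b where ab: "x = (a, b)" by force
    have "(a, b) \<in> ladder k p q N lend rend i" using x ab by simp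
    hence "present N lend rend a \<and> present N lend rend b"
      using ladder_edge_present unfolding ladder_mem by (auto split: if_splits)
    thus "x \<in> {..2*N+1} \<times> {..2*N+1}" using present_le ab by auto
  qed
  thus "finite (ladder k p q N lend rend i)" by (rule finite_subset) simp
next
  fix i assume "k \<le> i"
  thus "ladder k p q N lend rend i = {}" using assms unfolding ladder_def by auto
next
  fix i assume "i < k" "\<not> incons i"
  hence "i \<noteq> p" "i \<noteq> q" using assms by auto
  thus "key_consistent (ladder k p q N lend rend i)" unfolding key_consistent_def ladder_mem by auto
qed

lemma le_around_cycle:
  fixes f :: "nat \<Rightarrow> nat"
  assumes mono: "\<forall>i<k. f i \<le> f (Suc i mod k)" and "i < k" "j < k"
  shows "f i \<le> f j"
proof -
  have up: "f 0 \<le> f j" if "j < k" for j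
    using that
  proof (induction j)
    case (Suc j)
    thus ?case using mono[rule_format, of j] by simp
  qed simp
  have down: "f (k - 1 - d) \<le> f (k - 1)" if "d < k" for d
    using that
  proof (induction d)
    case (Suc d)
    have "Suc (k - 1 - Suc d) mod k = k - 1 - d" using Suc.prems by simp
    thus ?case using Suc mono[rule_format, of "k - 1 - Suc d"] by simp
  qed simp
  have "f (k - 1) \<le> f 0" using mono[rule_format, of "k - 1"] \<open>i < k\<close> by simp
  thus ?thesis using down[of "k - 1 - i"] up[OF \<open>j < k\<close>] \<open>i < k\<close> by simp
qed

lemma repair_ladder_edge:
  assumes R: "repair k (ladder k p q N lend rend) r" and "i = p \<or> i = q" "i < k" "(e, e') \<in> r i"
  shows "ladder_edge N lend rend e e'"
proof -
  have "(e, e') \<in> ladder k p q N lend rend i"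
    using R assms(3,4) unfolding repair_iff sub_inst_def by blast
  thus ?thesis using assms(2) unfolding ladder_mem by (auto split: if_splits)
qed

lemma repair_ladder_choice:
  assumes R: "repair k (ladder k p q N lend rend) r" and "p < k" "q < k" "p \<noteq> q"
    and "alive N e" "3 \<le> N"
  shows "\<exists>e'. (e, e') \<in> r (if even (pos e) then p else q) \<and> ladder_edge N lend rend e e'"
proof -
  let ?i = "if even (pos e) then p else q"
  have ik: "?i < k" and ipq: "?i = p \<or> ?i = q" using assms(2,3) by simp_all
  obtain e'' where "ladder_edge N lend rend e e''" using alive_has_ladder_edge assms(5,6) by blast
  hence "e \<in> fst ` ladder k p q N lend rend ?i" using ladder_edge_mem assms(4) by force
  moreover have "fst ` ladder k p q N lend rend ?i \<subseteq> fst ` r ?i"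
    using R ik unfolding repair_iff by blast
  ultimately obtain e' where "(e, e') \<in> r ?i" by force
  thus ?thesis using repair_ladder_edge[OF R ipq ik] by blast
qed

text \<open>An \<open>R\<^sub>p\<close>-fact and an \<open>R\<^sub>q\<close>-fact forming a 2-cycle in a repair yield the query: all
  variables on the arc from \<open>p + 1\<close> to \<open>q\<close> take one value, all others the other.\<close>

lemma ladder_two_cycle:
  assumes pq: "p < q" and qk: "q < k" and R: "repair k (ladder k p q N lend rend) r"
    and ab: "(a, b) \<in> r p" and ba: "(b, a) \<in> r q"
  shows "cycle_query k r"
proof -
  have pa: "present N lend rend a" and pb: "present N lend rend b"
    using repair_ladder_edge[OF R _ _ ab] ladder_edge_present pq qk by auto
  define x where "x i = (if p < i \<and> i \<le> q then b else a)" for i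
  have ri: "r i = ladder k p q N lend rend i" if "i < k" "i \<noteq> p" "i \<noteq> q" for i
    using repair_keeps_consistent_relation[OF R that(1)] that
    unfolding key_consistent_def ladder_mem by auto
  have "(x i, x (Suc i mod k)) \<in> r i" if ik: "i < k" for i
  proof -
    consider "i = p" | "i = q" | "i \<noteq> p" "i \<noteq> q" by blast
    thus ?thesis
    proof cases
      case 1
      thus ?thesis using ab pq qk unfolding x_def by simp
    next
      case 2
      have "x (Suc q mod k) = a" using qk unfolding x_def by (simp add: mod_if)
      thus ?thesis using 2 ba pq unfolding x_def by simp
    next
      case 3
      have "x (Suc i mod k) = x i" using 3 ik qk unfolding x_def by (auto simp: mod_if)
      moreover have "present N lend rend (x i)" unfolding x_def using pa pb by simp
      ultimately show ?thesis using ri[OF ik 3] 3 ik by (simp add: ladder_mem)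
    qed
  qed
  thus ?thesis unfolding cycle_query_def by blast
qed

text \<open>In the closed ladder lane 0 has no endpoints: walking along the chosen facts from its
  left end, some two neighbours must choose each other.\<close>

lemma repair_closed_ladder_goes_right:
  fixes one :: "nat \<Rightarrow> bool" defines "one \<equiv> \<lambda>c. c = 1"
  assumes pq: "p < q" and qk: "q < k" and N3: "3 \<le> N"
    and R: "repair k (ladder k p q N one one) r" and acyclic: "\<not> cycle_query k r"
  shows "1 \<le> t \<Longrightarrow> t < N \<Longrightarrow> (2 * t, 2 * t + 2) \<in> r (if even t then p else q)"
proof (induction t)
  case (Suc t)
  have "alive N (2 * Suc t)" unfolding alive_def using Suc.prems by simp
  then obtain e' where e': "(2 * Suc t, e') \<in> r (if even (Suc t) then p else q)"
    and ed: "ladder_edge N one one (2 * Suc t) e'"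
    using repair_ladder_choice[OF R _ qk _ _ N3] pq qk by fastforce
  have lane0: "lane e' = 0" and pe: "present N one one e'"
    using ed unfolding ladder_edge_def by auto
  have "pos e' = Suc (Suc t) \<or> pos e' = t" using ed unfolding ladder_edge_def by auto
  thus ?case
  proof (elim disjE)
    assume "pos e' = Suc (Suc t)"
    hence "e' = 2 * Suc t + 2" using lane0 pos_lane_eq_iff[of e'] by simp
    thus ?case using e' by simp
  next
    assume pt: "pos e' = t"
    hence e't: "e' = 2 * t" using lane0 pos_lane_eq_iff[of e'] by simp
    have "t \<noteq> 0" using pe pt lane0 unfolding present_def one_def by auto
    hence "(2 * t, 2 * t + 2) \<in> r (if even t then p else q)" using Suc by simp
    moreover have "(2 * t + 2, 2 * t) \<in> r (if even t then q else p)"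
      using e' e't by (cases "even t") simp_all
    ultimately have "cycle_query k r" using ladder_two_cycle[OF pq qk R[unfolded one_def]]
      unfolding one_def by (cases "even t") auto
    thus ?case using acyclic by blast
  qed
qed simp

lemma certain_closed_ladder:
  assumes pq: "p < q" and qk: "q < k" and N3: "3 \<le> N"
  shows "certain k (ladder k p q N (\<lambda>c. c = 1) (\<lambda>c. c = 1))"
  unfolding certain_def
proof (intro allI impI)
  fix r assume R: "repair k (ladder k p q N (\<lambda>c. c = 1) (\<lambda>c. c = 1)) r"
  show "cycle_query k r"
  proof (rule ccontr)
  assume "\<not> cycle_query k r"
  hence "(2 * (N - 1), 2 * (N - 1) + 2) \<in> r (if even (N - 1) then p else q)"
    using repair_closed_ladder_goes_right[OF pq qk N3 R, of "N - 1"] N3 by simp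
  moreover have "(if even (N - 1) then p else q) = p \<or> (if even (N - 1) then p else q) = q"
    and "(if even (N - 1) then p else q) < k" using pq qk by simp_all
  ultimately have "ladder_edge N (\<lambda>c. c = 1) (\<lambda>c. c = 1) (2 * (N - 1)) (2 * (N - 1) + 2)"
    using repair_ladder_edge[OF R] by blast
  hence "present N (\<lambda>c. c = 1) (\<lambda>c. c = 1) (2 * (N - 1) + 2)"
    using ladder_edge_present by blast
  moreover have "pos (2 * (N - 1) + 2) = N" "lane (2 * (N - 1) + 2) = 0" using N3 by simp_all
  ultimately show False using N3 unfolding present_def by simp
  qed
qed

text \<open>In the open ladder lane 0 has only its left endpoint and lane 1 only its right one; the
  repair sending lane 0 to the left and lane 1 to the right strictly increases the distance
  walked at every \<open>R\<^sub>p\<close>-fact, so it cannot contain a cycle.\<close>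

definition open_step :: "nat \<Rightarrow> nat" where
  "open_step e = (if lane e = 1 then e + 2 else e - 2)"

definition open_progress :: "nat \<Rightarrow> nat \<Rightarrow> nat" where
  "open_progress N e = (if lane e = 1 then pos e else N - pos e)"

lemma ladder_edge_open_step:
  assumes al: "alive N e"
  shows "ladder_edge N (\<lambda>c. c = 0) (\<lambda>c. c = 1) e (open_step e) \<and>
    open_progress N (open_step e) = Suc (open_progress N e)"
proof (cases "lane e = 1")
  case True
  have "present N (\<lambda>c. c = 0) (\<lambda>c. c = 1) (e + 2)"
    unfolding present_def using al True unfolding alive_def by auto
  thus ?thesis using ladder_edge_right[OF al] True
    unfolding open_step_def open_progress_def by simp
next
  case False
  hence c0: "lane e = 0" using lane_cases by blast
  have pm: "pos (e - 2) = pos e - 1" "lane (e - 2) = lane e"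
    using pos_sub_2 al unfolding alive_def by auto
  have "present N (\<lambda>c. c = 0) (\<lambda>c. c = 1) (e - 2)"
    unfolding present_def pm using al c0 unfolding alive_def by auto
  moreover have "N - pos (e - 2) = Suc (N - pos e)"
    using pm(1) al unfolding alive_def by (simp add: Suc_diff_le)
  ultimately show ?thesis using ladder_edge_left[OF al] False pm(2)
    unfolding open_step_def open_progress_def by simp
qed

definition open_repair :: "nat \<Rightarrow> nat \<Rightarrow> nat \<Rightarrow> nat \<Rightarrow> inst" where
  "open_repair k p q N i = (if i = p \<or> i = q
     then {(e, e'). (e, e') \<in> ladder k p q N (\<lambda>c. c = 0) (\<lambda>c. c = 1) i \<and> e' = open_step e}
     else ladder k p q N (\<lambda>c. c = 0) (\<lambda>c. c = 1) i)"

lemma repair_open_repair: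
  assumes pk: "p < k" and qk: "q < k" and pq: "p \<noteq> q"
  shows "repair k (ladder k p q N (\<lambda>c. c = 0) (\<lambda>c. c = 1)) (open_repair k p q N)"
proof (rule repairI)
  let ?I = "ladder k p q N (\<lambda>c. c = 0) (\<lambda>c. c = 1)"
  show "sub_inst k (open_repair k p q N) ?I"
    unfolding sub_inst_def open_repair_def using pk qk by (auto simp: ladder_def)
  show "consistent_inst k (open_repair k p q N)"
    unfolding consistent_inst_def key_consistent_def open_repair_def by (auto simp: ladder_mem)
  show "\<forall>i<k. fst ` ?I i \<subseteq> fst ` open_repair k p q N i"
  proof (intro allI impI subsetI)
    fix i e assume "i < k" and "e \<in> fst ` ?I i"
    then obtain e'' where ee: "(e, e'') \<in> ?I i" by force
    show "e \<in> fst ` open_repair k p q N i"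
    proof (cases "i = p \<or> i = q")
      case True
      hence "alive N e" using ee unfolding ladder_mem ladder_edge_def by (auto split: if_splits)
      hence "(e, open_step e) \<in> ?I i"
        using ladder_edge_open_step ee True pq unfolding ladder_mem by (auto split: if_splits)
      thus ?thesis unfolding open_repair_def using True by force
    next
      case False
      thus ?thesis using ee unfolding open_repair_def by force
    qed
  qed
qed

lemma open_repair_progress:
  assumes e: "(e, e') \<in> open_repair k p q N i" and pq: "p \<noteq> q"
  shows "if i = p \<or> i = q then open_progress N e' = Suc (open_progress N e) else e' = e"
proof (cases "i = p \<or> i = q")
  case True
  hence "(e, e') \<in> ladder k p q N (\<lambda>c. c = 0) (\<lambda>c. c = 1) i" "e' = open_step e"
    using e unfolding open_repair_def by auto
  hence "alive N e" "e' = open_step e"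
    using True pq unfolding ladder_mem ladder_edge_def by (auto split: if_splits)
  thus ?thesis using True ladder_edge_open_step by simp
next
  case False
  thus ?thesis using e unfolding open_repair_def by (simp add: ladder_mem split: if_splits)
qed

lemma not_certain_open_ladder:
  assumes pq: "p < q" and qk: "q < k"
  shows "\<not> certain k (ladder k p q N (\<lambda>c. c = 0) (\<lambda>c. c = 1))"
proof
  have pk: "p < k" using pq qk by simp
  assume "certain k (ladder k p q N (\<lambda>c. c = 0) (\<lambda>c. c = 1))"
  then obtain x where x: "\<forall>i<k. (x i, x (Suc i mod k)) \<in> open_repair k p q N i"
    using repair_open_repair[OF pk qk] pq unfolding certain_def cycle_query_def by blast
  let ?f = "\<lambda>i. open_progress N (x i)"
  have step: "if i = p \<or> i = q then ?f (Suc i mod k) = Suc (?f i) else x (Suc i mod k) = x i"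
    if "i < k" for i
    using open_repair_progress x that pq by blast
  hence "\<forall>i<k. ?f i \<le> ?f (Suc i mod k)" by (metis eq_imp_le le_SucI)
  hence "?f (Suc p mod k) \<le> ?f p" using le_around_cycle[of k ?f] pk by simp
  thus False using step[OF pk] by simp
qed

section \<open>Ladders of the same length are indistinguishable\<close>

text \<open>Duplicator's invariant in the game on the two ladders, with the radius \<open>D\<close> halved in
  every round as for linear orders: pebbles near an end lie at the same position with the same
  endpoint status, pebble positions have the same parity, and two pebbles near each other in
  one ladder are placed at the same offset and lanes in the other.\<close>

definition near :: "nat \<Rightarrow> nat \<Rightarrow> nat \<Rightarrow> bool" where
  "near D a a' \<longleftrightarrow> lane a = lane a' \<and> pos a \<le> pos a' + D \<and> pos a' \<le> pos a + D"

definition pebble_ok ::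
    "nat \<Rightarrow> (nat \<Rightarrow> bool) \<Rightarrow> (nat \<Rightarrow> bool) \<Rightarrow> (nat \<Rightarrow> bool) \<Rightarrow> (nat \<Rightarrow> bool) \<Rightarrow> nat \<Rightarrow> nat \<Rightarrow> nat \<Rightarrow> bool" where
  "pebble_ok N l1 r1 l2 r2 D a b \<longleftrightarrow> present N l1 r1 a \<and> present N l2 r2 b \<and>
     (even (pos a) \<longleftrightarrow> even (pos b)) \<and>
     ((pos a \<le> D \<or> pos b \<le> D) \<longrightarrow> pos a = pos b \<and> l1 (lane a) = l2 (lane b)) \<and>
     ((N \<le> pos a + D \<or> N \<le> pos b + D) \<longrightarrow> pos a = pos b \<and> r1 (lane a) = r2 (lane b))"

definition pebbles_agree :: "nat \<Rightarrow> nat \<Rightarrow> nat \<Rightarrow> nat \<Rightarrow> nat \<Rightarrow> bool" where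
  "pebbles_agree D a b a' b' \<longleftrightarrow> (near D a a' \<or> near D b b') \<longrightarrow>
     (lane a = lane a' \<and> lane b = lane b' \<and> pos a' + pos b = pos b' + pos a)"

definition game_inv ::
    "nat \<Rightarrow> (nat \<Rightarrow> bool) \<Rightarrow> (nat \<Rightarrow> bool) \<Rightarrow> (nat \<Rightarrow> bool) \<Rightarrow> (nat \<Rightarrow> bool) \<Rightarrow> nat \<Rightarrow> (nat \<times> nat) set \<Rightarrow> bool" where
  "game_inv N l1 r1 l2 r2 D S \<longleftrightarrow> (\<forall>(a, b)\<in>S. pebble_ok N l1 r1 l2 r2 D a b) \<and>
     (\<forall>(a, b)\<in>S. \<forall>(a', b')\<in>S. pebbles_agree D a b a' b')"

lemma near_mono: "near D a a' \<Longrightarrow> D \<le> D' \<Longrightarrow> near D' a a'"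
  unfolding near_def by linarith

lemma game_inv_mono:
  assumes "game_inv N l1 r1 l2 r2 D' S" "D \<le> D'" "S' \<subseteq> S"
  shows "game_inv N l1 r1 l2 r2 D S'"
proof -
  have "pebble_ok N l1 r1 l2 r2 D a b" if "pebble_ok N l1 r1 l2 r2 D' a b" for a b
  proof -
    have "pos a \<le> D \<or> pos b \<le> D \<Longrightarrow> pos a \<le> D' \<or> pos b \<le> D'"
      and "N \<le> pos a + D \<or> N \<le> pos b + D \<Longrightarrow> N \<le> pos a + D' \<or> N \<le> pos b + D'"
      using assms(2) by linarith+
    thus ?thesis using that unfolding pebble_ok_def by blast
  qed
  moreover have "pebbles_agree D a b a' b'" if "pebbles_agree D' a b a' b'" for a b a' b'
    using that near_mono[OF _ assms(2)] unfolding pebbles_agree_def by blast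
  ultimately show ?thesis using assms(1,3) unfolding game_inv_def by blast
qed

lemma pebbles_agree_sym: "pebbles_agree D a b a' b' \<longleftrightarrow> pebbles_agree D a' b' a b"
  unfolding pebbles_agree_def near_def by auto

lemma game_inv_insert:
  assumes "game_inv N l1 r1 l2 r2 D S" "pebble_ok N l1 r1 l2 r2 D a b"
    "\<forall>(a', b')\<in>S. pebbles_agree D a b a' b'"
  shows "game_inv N l1 r1 l2 r2 D (insert (a, b) S)"
proof -
  have "pebbles_agree D a b a b" unfolding pebbles_agree_def by simp
  hence "\<forall>(x, y)\<in>insert (a, b) S. \<forall>(x', y')\<in>insert (a, b) S. pebbles_agree D x y x' y'"
    using assms(1,3) pebbles_agree_sym unfolding game_inv_def by fastforce
  thus ?thesis using assms(1,2) unfolding game_inv_def by blast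
qed

lemma game_inv_insert_isolated:
  assumes "game_inv N l1 r1 l2 r2 D S" "pebble_ok N l1 r1 l2 r2 D a b"
    "\<forall>(a', b')\<in>S. \<not> near D a a' \<and> \<not> near D b b'"
  shows "game_inv N l1 r1 l2 r2 D (insert (a, b) S)"
  using assms game_inv_insert unfolding pebbles_agree_def by fastforce

lemma game_inv_swap:
  assumes "game_inv N l1 r1 l2 r2 D S"
  shows "game_inv N l2 r2 l1 r1 D (prod.swap ` S)"
proof -
  have "pebble_ok N l2 r2 l1 r1 D b a" if "(a, b) \<in> S" for a b
    using assms that unfolding game_inv_def pebble_ok_def by auto
  moreover have "pebbles_agree D b a b' a'" if "(a, b) \<in> S" "(a', b') \<in> S" for a b a' b'
  proof -
    have "pebbles_agree D a b a' b'" using assms that unfolding game_inv_def by auto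
    thus ?thesis unfolding pebbles_agree_def by auto
  qed
  ultimately show ?thesis unfolding game_inv_def by auto
qed

lemma game_inv_atoms:
  assumes I: "game_inv N l1 r1 l2 r2 D S" and D: "1 \<le> D"
    and ab: "(a, b) \<in> S" and ab': "(a', b') \<in> S"
  shows "(a = a' \<longleftrightarrow> b = b') \<and>
    (\<forall>i. (a, a') \<in> ladder k p q N l1 r1 i \<longleftrightarrow> (b, b') \<in> ladder k p q N l2 r2 i)"
proof -
  have s: "pebble_ok N l1 r1 l2 r2 D a b" and s': "pebble_ok N l1 r1 l2 r2 D a' b'"
    and po: "pebbles_agree D a b a' b'" using I ab ab' unfolding game_inv_def by auto
  have pa: "present N l1 r1 a" "present N l1 r1 a'" and pb: "present N l2 r2 b" "present N l2 r2 b'"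
    using s s' unfolding pebble_ok_def by auto
  have ev: "even (pos a) \<longleftrightarrow> even (pos b)" using s unfolding pebble_ok_def by blast
  have al: "alive N a \<longleftrightarrow> alive N b"
    using s D unfolding pebble_ok_def alive_def by (cases "pos a = pos b") auto
  have offset: "lane a = lane a' \<and> lane b = lane b' \<and> pos a' + pos b = pos b' + pos a"
    if "near 1 a a' \<or> near 1 b b'"
    using po that near_mono[OF _ D] unfolding pebbles_agree_def by blast
  have eq: "a = a' \<longleftrightarrow> b = b'"
  proof
    assume "a = a'"
    hence "near 1 a a'" unfolding near_def by simp
    thus "b = b'" using offset \<open>a = a'\<close> pos_lane_eq_iff[of b b'] by simp
  next
    assume "b = b'"
    hence "near 1 b b'" unfolding near_def by simp
    thus "a = a'" using offset \<open>b = b'\<close> pos_lane_eq_iff[of a a'] by simp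
  qed
  have "(lane a = lane a' \<and> (pos a' = Suc (pos a) \<or> pos a = Suc (pos a'))) \<longleftrightarrow>
      (lane b = lane b' \<and> (pos b' = Suc (pos b) \<or> pos b = Suc (pos b')))"
  proof
    assume h: "lane a = lane a' \<and> (pos a' = Suc (pos a) \<or> pos a = Suc (pos a'))"
    hence "near 1 a a'" unfolding near_def by auto
    thus "lane b = lane b' \<and> (pos b' = Suc (pos b) \<or> pos b = Suc (pos b'))"
      using offset h by linarith
  next
    assume h: "lane b = lane b' \<and> (pos b' = Suc (pos b) \<or> pos b = Suc (pos b'))"
    hence "near 1 b b'" unfolding near_def by auto
    thus "lane a = lane a' \<and> (pos a' = Suc (pos a) \<or> pos a = Suc (pos a'))"
      using offset h by linarith
  qed
  hence "ladder_edge N l1 r1 a a' \<longleftrightarrow> ladder_edge N l2 r2 b b'"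
    unfolding ladder_edge_def using al pa pb by blast
  thus ?thesis using eq ev pa pb unfolding ladder_mem by auto
qed

lemma lane_flag_inj: "l 0 \<noteq> l 1 \<Longrightarrow> l (lane x) = l (lane y) \<Longrightarrow> lane x = lane y"
  using lane_cases[of x] lane_cases[of y] by auto

lemma lane_flag_surj: "l 0 \<noteq> l (1::nat) \<Longrightarrow> \<exists>c<2. l c = (X::bool)"
  by (cases "l 0 = X") (auto intro: exI[of _ 0] exI[of _ 1])

lemma pebble_ok_translate:
  assumes ok0: "pebble_ok N l1 r1 l2 r2 (2 * D) a0 b0" and pa: "present N l1 r1 a"
    and near: "near D a a0"
  shows "\<exists>b. pebble_ok N l1 r1 l2 r2 D a b \<and> pos b + pos a0 = pos b0 + pos a \<and> lane b = lane b0"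
proof -
  have ev0: "even (pos a0) \<longleftrightarrow> even (pos b0)"
    and L0: "pos a0 \<le> 2*D \<or> pos b0 \<le> 2*D \<longrightarrow> pos a0 = pos b0 \<and> l1 (lane a0) = l2 (lane b0)"
    and R0: "N \<le> pos a0 + 2*D \<or> N \<le> pos b0 + 2*D \<longrightarrow> pos a0 = pos b0 \<and> r1 (lane a0) = r2 (lane b0)"
    using ok0 unfolding pebble_ok_def by blast+
  have c1: "lane a = lane a0" "pos a \<le> pos a0 + D" "pos a0 \<le> pos a + D"
    using near unfolding near_def by auto
  define t where "t = pos b0 + pos a - pos a0"
  have t: "t + pos a0 = pos b0 + pos a"
  proof -
    have "pos a0 \<le> pos b0 + pos a"
      using L0 c1 by (cases "pos a0 \<le> 2*D \<or> pos b0 \<le> 2*D") linarith+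
    thus ?thesis unfolding t_def by simp
  qed
  define b where "b = 2 * t + lane b0"
  have pb: "pos b = t" and lb: "lane b = lane b0" unfolding b_def using lane_less_2[of b0] by auto
  have La: "t = pos a \<and> l1 (lane a) = l2 (lane b)" if "pos a \<le> D \<or> t \<le> D"
  proof -
    have "pos a0 \<le> 2*D \<or> pos b0 \<le> 2*D" using that t c1 by linarith
    thus ?thesis using L0 t c1 lb by simp
  qed
  have Ra: "t = pos a \<and> r1 (lane a) = r2 (lane b)" if "N \<le> pos a + D \<or> N \<le> t + D"
  proof -
    have "N \<le> pos a0 + 2*D \<or> N \<le> pos b0 + 2*D" using that t c1 by linarith
    thus ?thesis using R0 t c1 lb by simp
  qed
  have "t \<le> N"
  proof (cases "N \<le> pos a0 + 2*D \<or> N \<le> pos b0 + 2*D")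
    case True
    thus ?thesis using R0 t pa unfolding present_def by simp
  next
    case False
    thus ?thesis using t c1 by linarith
  qed
  hence pb': "present N l2 r2 b"
    using La Ra pa unfolding present_def pb by (cases "t = 0 \<or> t = N") auto
  have "even (pos a) \<longleftrightarrow> even t" using t ev0 by presburger
  hence "pebble_ok N l1 r1 l2 r2 D a b"
    unfolding pebble_ok_def pb using pa pb' La Ra by blast
  moreover have "pos b + pos a0 = pos b0 + pos a" using pb t by simp
  ultimately show ?thesis using lb by blast
qed

lemma game_inv_extend_near:
  assumes I: "game_inv N l1 r1 l2 r2 (2 * D) S" and pa: "present N l1 r1 a"
    and ab0: "(a0, b0) \<in> S" and near: "near D a a0"
  shows "\<exists>b. present N l2 r2 b \<and> game_inv N l1 r1 l2 r2 D (insert (a, b) S)"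
proof -
  have "pebble_ok N l1 r1 l2 r2 (2 * D) a0 b0" using I ab0 unfolding game_inv_def by auto
  then obtain b where translate: "pebble_ok N l1 r1 l2 r2 D a b"
    "pos b + pos a0 = pos b0 + pos a" "lane b = lane b0"
    using pebble_ok_translate[OF _ pa near] by blast
  have c1: "lane a = lane a0" "pos a \<le> pos a0 + D" "pos a0 \<le> pos a + D"
    using near unfolding near_def by auto
  have "pebbles_agree D a b a' b'" if ab': "(a', b') \<in> S" for a' b'
    unfolding pebbles_agree_def
  proof
    assume h: "near D a a' \<or> near D b b'"
    have "near (2*D) a0 a' \<or> near (2*D) b0 b'"
      using h c1 translate(2,3) unfolding near_def by linarith
    moreover have "pebbles_agree (2*D) a0 b0 a' b'" using I ab0 ab' unfolding game_inv_def by auto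
    ultimately have "lane a0 = lane a' \<and> lane b0 = lane b' \<and> pos a' + pos b0 = pos b' + pos a0"
      unfolding pebbles_agree_def by blast
    thus "lane a = lane a' \<and> lane b = lane b' \<and> pos a' + pos b = pos b' + pos a"
      using c1 translate(2,3) by linarith
  qed
  moreover have "game_inv N l1 r1 l2 r2 D S" using game_inv_mono[OF I _ order_refl] by simp
  moreover have "present N l2 r2 b" using translate(1) unfolding pebble_ok_def by blast
  ultimately show ?thesis using game_inv_insert translate(1) by blast
qed

lemma game_inv_extend_left:
  assumes inj: "l1 0 \<noteq> l1 1" "l2 0 \<noteq> l2 1"
    and I: "game_inv N l1 r1 l2 r2 (2 * D) S" and pa: "present N l1 r1 a"
    and left: "pos a \<le> D" and N: "2 * D < N"
    and isolated: "\<forall>(a', b')\<in>S. \<not> near D a a'"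
  shows "\<exists>b. present N l2 r2 b \<and> game_inv N l1 r1 l2 r2 D (insert (a, b) S)"
proof -
  obtain c where c2: "c < 2" and fc: "l2 c = l1 (lane a)" using lane_flag_surj[OF inj(2)] by blast
  define b where "b = 2 * pos a + c"
  have pb: "pos b = pos a" and lb: "lane b = c" unfolding b_def using c2 by auto
  have pb': "present N l2 r2 b" using pa left N fc unfolding present_def pb lb by auto
  have "pebble_ok N l1 r1 l2 r2 D a b"
    unfolding pebble_ok_def pb lb using pa pb' left N fc by simp
  moreover have b_isolated: "\<not> near D b b'" if ab': "(a', b') \<in> S" for a' b'
  proof
    assume h: "near D b b'"
    hence lb': "lane b' = c" and "pos b' \<le> 2*D" using lb pb left unfolding near_def by auto
    moreover have "pebble_ok N l1 r1 l2 r2 (2*D) a' b'" using I ab' unfolding game_inv_def by auto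
    ultimately have "pos a' = pos b'" "l1 (lane a') = l2 (lane b')"
      unfolding pebble_ok_def by auto
    moreover have "lane a' = lane a" using lane_flag_inj[OF inj(1)] lb' fc calculation(2) by simp
    ultimately have "near D a a'" using h pb lb lb' unfolding near_def by simp
    thus False using isolated ab' by blast
  qed
  moreover have "game_inv N l1 r1 l2 r2 D S" using game_inv_mono[OF I _ order_refl] by simp
  moreover have "\<forall>(a', b')\<in>S. \<not> near D a a' \<and> \<not> near D b b'"
    using isolated b_isolated by auto
  ultimately show ?thesis using game_inv_insert_isolated pb' by blast
qed

lemma game_inv_extend_right:
  assumes inj: "r1 0 \<noteq> r1 1" "r2 0 \<noteq> r2 1"
    and I: "game_inv N l1 r1 l2 r2 (2 * D) S" and pa: "present N l1 r1 a"
    and right: "N \<le> pos a + D" and not_left: "D < pos a"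
    and isolated: "\<forall>(a', b')\<in>S. \<not> near D a a'"
  shows "\<exists>b. present N l2 r2 b \<and> game_inv N l1 r1 l2 r2 D (insert (a, b) S)"
proof -
  obtain c where c2: "c < 2" and fc: "r2 c = r1 (lane a)" using lane_flag_surj[OF inj(2)] by blast
  define b where "b = 2 * pos a + c"
  have pb: "pos b = pos a" and lb: "lane b = c" unfolding b_def using c2 by auto
  have pb': "present N l2 r2 b" using pa not_left fc unfolding present_def pb lb by auto
  have "pebble_ok N l1 r1 l2 r2 D a b"
    unfolding pebble_ok_def pb lb using pa pb' right not_left fc by simp
  moreover have b_isolated: "\<not> near D b b'" if ab': "(a', b') \<in> S" for a' b'
  proof
    assume h: "near D b b'"
    hence lb': "lane b' = c" and "N \<le> pos b' + 2*D" using lb pb right unfolding near_def by auto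
    moreover have "pebble_ok N l1 r1 l2 r2 (2*D) a' b'" using I ab' unfolding game_inv_def by auto
    ultimately have "pos a' = pos b'" "r1 (lane a') = r2 (lane b')"
      unfolding pebble_ok_def by auto
    moreover have "lane a' = lane a" using lane_flag_inj[OF inj(1)] lb' fc calculation(2) by simp
    ultimately have "near D a a'" using h pb lb lb' unfolding near_def by simp
    thus False using isolated ab' by blast
  qed
  moreover have "game_inv N l1 r1 l2 r2 D S" using game_inv_mono[OF I _ order_refl] by simp
  moreover have "\<forall>(a', b')\<in>S. \<not> near D a a' \<and> \<not> near D b b'"
    using isolated b_isolated by auto
  ultimately show ?thesis using game_inv_insert_isolated pb' by blast
qed

text \<open>The \<open>card B + 1\<close> candidates are pairwise more than \<open>2 D\<close> apart, so each element of \<open>B\<close>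
  is near at most one of them.\<close>

lemma exists_isolated_position:
  assumes "finite B"
  shows "\<exists>j\<le>card B. \<forall>b\<in>B. \<not> near D (2 * ((2*D+2)*(j+1) + s)) b"
proof (rule ccontr)
  define c where "c j = 2 * ((2*D+2)*(j+1) + s)" for j
  assume "\<not> ?thesis"
  hence "\<forall>j\<le>card B. \<exists>b\<in>B. near D (c j) b" unfolding c_def by blast
  then obtain f where f: "\<And>j. j \<le> card B \<Longrightarrow> f j \<in> B \<and> near D (c j) (f j)" by metis
  have pc: "pos (c j) = (2*D+2)*(j+1) + s" for j unfolding c_def by (rule pos_double)
  have separated: "\<not> (near D (c j) y \<and> near D (c j') y)" if "j < j'" for j j' y
  proof
    assume h: "near D (c j) y \<and> near D (c j') y"
    have "(2*D+2)*(j+2) \<le> (2*D+2)*(j'+1)" using that by (intro mult_le_mono2) simp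
    moreover have "(2*D+2)*(j+2) = (2*D+2)*(j+1) + (2*D+2)" by (simp add: algebra_simps)
    ultimately show False using h pc[of j] pc[of j'] unfolding near_def by linarith
  qed
  have "inj_on f {..card B}"
  proof (rule inj_onI)
    fix j j' assume "j \<in> {..card B}" "j' \<in> {..card B}" "f j = f j'"
    thus "j = j'" using f separated by (metis atMost_iff linorder_neqE_nat)
  qed
  moreover have "f ` {..card B} \<subseteq> B" using f by auto
  ultimately have "card {..card B} \<le> card B" using card_inj_on_le assms by blast
  thus False by simp
qed

lemma game_inv_extend_far:
  assumes I: "game_inv N l1 r1 l2 r2 D S" and fin: "finite S" and pa: "present N l1 r1 a"
    and NB: "(2*D+2)*(card S + 3) \<le> N" and not_left: "D < pos a" and not_right: "pos a + D < N"
    and isolated: "\<forall>(a', b')\<in>S. \<not> near D a a'"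
  shows "\<exists>b. present N l2 r2 b \<and> game_inv N l1 r1 l2 r2 D (insert (a, b) S)"
proof -
  obtain j where jS: "j \<le> card (snd ` S)"
    and far: "\<forall>b'\<in>snd ` S. \<not> near D (2 * ((2*D+2)*(j+1) + pos a mod 2)) b'"
    using exists_isolated_position fin by blast
  define b where "b = 2 * ((2*D+2)*(j+1) + pos a mod 2)"
  have pb: "pos b = (2*D+2)*(j+1) + pos a mod 2" unfolding b_def by (rule pos_double)
  have "j \<le> card S" using jS card_image_le[OF fin, of snd] by simp
  hence "(2*D+2)*(j+1) \<le> (2*D+2)*(card S+1)" by (intro mult_le_mono2) simp
  moreover have "(2*D+2)*(card S+3) = (2*D+2)*(card S+1) + (4*D+4)" by (simp add: algebra_simps)
  moreover have "2*D+2 \<le> (2*D+2)*(j+1)" by simp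
  ultimately have b_left: "D < pos b" and b_right: "pos b + D < N"
    using NB unfolding pb by linarith+
  have "even (pos a) \<longleftrightarrow> even (pos b)"
  proof -
    obtain X where "X = (2*D+2)*(j+1)" "even X" by simp
    thus ?thesis unfolding pb by presburger
  qed
  moreover have pb': "present N l2 r2 b" unfolding present_def using b_left b_right by simp
  ultimately have "pebble_ok N l1 r1 l2 r2 D a b"
    unfolding pebble_ok_def using pa not_left not_right b_left b_right by simp
  moreover have "\<forall>(a', b')\<in>S. \<not> near D a a' \<and> \<not> near D b b'"
    using isolated far unfolding b_def by force
  ultimately show ?thesis using game_inv_insert_isolated[OF I] pb' by blast
qed

lemma game_inv_extend:
  assumes inj: "l1 0 \<noteq> l1 1" "r1 0 \<noteq> r1 1" "l2 0 \<noteq> l2 1" "r2 0 \<noteq> r2 1"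
    and I: "game_inv N l1 r1 l2 r2 (2 * D) S" and fin: "finite S" and D: "1 \<le> D"
    and NB: "(2*D+2)*(card S + 3) \<le> N" and pa: "present N l1 r1 a"
  shows "\<exists>b. present N l2 r2 b \<and> game_inv N l1 r1 l2 r2 D (insert (a, b) S)"
proof -
  have "(2*D+2)*3 \<le> (2*D+2)*(card S + 3)" by (intro mult_le_mono2) simp
  hence N: "2 * D < N" using NB by simp
  show ?thesis
  proof (cases "\<exists>(a0, b0)\<in>S. near D a a0")
    case True
    thus ?thesis using game_inv_extend_near[OF I pa] by blast
  next
    case isolated: False
    consider "pos a \<le> D" | "D < pos a" "N \<le> pos a + D" | "D < pos a" "pos a + D < N" by linarith
    thus ?thesis
    proof cases
      case 1
      thus ?thesis using game_inv_extend_left[OF inj(1,3) I pa _ N] isolated by blast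
    next
      case 2
      thus ?thesis using game_inv_extend_right[OF inj(2,4) I pa] isolated by blast
    next
      case 3
      have "D \<le> 2 * D" by simp
      thus ?thesis using game_inv_extend_far[OF game_inv_mono[OF I] fin pa NB] 3 isolated by blast
    qed
  qed
qed

lemma game_inv_step:
  assumes inj: "l1 0 \<noteq> l1 1" "r1 0 \<noteq> r1 1" "l2 0 \<noteq> l2 1" "r2 0 \<noteq> r2 1"
    and I: "game_inv N l1 r1 l2 r2 (2 * 2^m) ((\<lambda>y. (v y, w y)) ` X)"
    and fin: "finite X" and card: "card X + Suc m \<le> n" and N: "(2 * 2^n + 2) * (n + 3) \<le> N"
    and pa: "present N l1 r1 a"
  shows "\<exists>b. present N l2 r2 b \<and>
    game_inv N l1 r1 l2 r2 (2^m) ((\<lambda>y. ((v(x := a)) y, (w(x := b)) y)) ` insert x X)"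
proof -
  let ?S = "(\<lambda>y. (v y, w y)) ` X"
  have "2^m \<le> (2::nat)^n" using card by (intro power_increasing) auto
  hence "2 * 2^m + 2 \<le> 2 * 2^n + (2::nat)" by simp
  moreover have "card ?S \<le> card X" using card_image_le[OF fin] .
  hence "card ?S + 3 \<le> n + 3" using card by simp
  ultimately have "(2 * 2^m + 2) * (card ?S + 3) \<le> N"
    using mult_le_mono N le_trans by blast
  then obtain b where "present N l2 r2 b" and I': "game_inv N l1 r1 l2 r2 (2^m) (insert (a, b) ?S)"
    using game_inv_extend[OF inj I _ _ _ pa] fin by auto
  moreover have "(\<lambda>y. ((v(x := a)) y, (w(x := b)) y)) ` insert x X \<subseteq> insert (a, b) ?S" by auto
  ultimately show ?thesis using game_inv_mono[OF I' order_refl] by blast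
qed

lemma game_inv_step_back:
  assumes inj: "l1 0 \<noteq> l1 1" "r1 0 \<noteq> r1 1" "l2 0 \<noteq> l2 1" "r2 0 \<noteq> r2 1"
    and I: "game_inv N l1 r1 l2 r2 (2 * 2^m) ((\<lambda>y. (v y, w y)) ` X)"
    and fin: "finite X" and card: "card X + Suc m \<le> n" and N: "(2 * 2^n + 2) * (n + 3) \<le> N"
    and pb: "present N l2 r2 b"
  shows "\<exists>a. present N l1 r1 a \<and>
    game_inv N l1 r1 l2 r2 (2^m) ((\<lambda>y. ((v(x := a)) y, (w(x := b)) y)) ` insert x X)"
proof -
  have "game_inv N l2 r2 l1 r1 (2 * 2^m) ((\<lambda>y. (w y, v y)) ` X)"
    using game_inv_swap[OF I] by (simp add: image_image)
  then obtain a where "present N l1 r1 a" and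
    I': "game_inv N l2 r2 l1 r1 (2^m) ((\<lambda>y. ((w(x := b)) y, (v(x := a)) y)) ` insert x X)"
    using game_inv_step[OF inj(3,4,1,2) _ fin card N pb] by blast
  moreover have "game_inv N l1 r1 l2 r2 (2^m) ((\<lambda>y. ((v(x := a)) y, (w(x := b)) y)) ` insert x X)"
    using game_inv_swap[OF I'] by (simp add: image_image)
  ultimately show ?thesis by blast
qed

lemma ladders_agree_on_sentences:
  assumes pk: "p < k" and qk: "q < k" and pq: "p \<noteq> q"
    and depth: "qdepth \<phi> \<le> n" and sentence: "fv \<phi> = {}" and N: "(2 * 2^n + 2) * (n + 3) \<le> N"
  shows "models k (ladder k p q N (\<lambda>c. c = 1) (\<lambda>c. c = 1)) \<phi> \<longleftrightarrow>
    models k (ladder k p q N (\<lambda>c. c = 0) (\<lambda>c. c = 1)) \<phi>"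
proof -
  let ?one = "\<lambda>c::nat. c = 1" and ?zero = "\<lambda>c::nat. c = 0"
  let ?I = "ladder k p q N ?one ?one" and ?J = "ladder k p q N ?zero ?one"
  have "(2::nat) * 3 \<le> (2 * 2^n + 2) * (n + 3)" by (intro mult_le_mono) auto
  hence N3: "3 \<le> N" using N by simp
  have adI: "adom k ?I = {e. present N ?one ?one e}" and adJ: "adom k ?J = {e. present N ?zero ?one e}"
    using adom_ladder[OF pk qk pq N3] by blast+
  have i1: "?one 0 \<noteq> ?one 1" and i0: "?zero 0 \<noteq> ?zero 1" by simp_all
  define P where "P m v w X \<longleftrightarrow> finite X \<and> card X + m \<le> n \<and>
      game_inv N ?one ?one ?zero ?one (2^m) ((\<lambda>y. (v y, w y)) ` X)"
    for m and v w :: "nat \<Rightarrow> nat" and X :: "nat set"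
  have card_insert: "card (insert x X) + m \<le> n" if "finite X" "card X + Suc m \<le> n" for x X m
    using that by (simp add: card_insert_if)
  have "sat k ?I (\<lambda>_. 0) \<phi> \<longleftrightarrow> sat k ?J (\<lambda>_. 0) \<phi>"
  proof (rule sat_iff_back_and_forth[where P = P])
    fix m v w X x y assume h: "P m v w X" "x \<in> X" "y \<in> X"
    have "game_inv N ?one ?one ?zero ?one (2^m) ((\<lambda>y. (v y, w y)) ` X)" "1 \<le> (2::nat)^m"
      using h(1) unfolding P_def by simp_all
    from game_inv_atoms[OF this] h(2,3)
    show "(v x = v y \<longleftrightarrow> w x = w y) \<and> (\<forall>i. (v x, v y) \<in> ?I i \<longleftrightarrow> (w x, w y) \<in> ?J i)"
      by blast
  next
    fix m v w X x a assume h: "P (Suc m) v w X" "a \<in> adom k ?I"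
    hence fin: "finite X" and c: "card X + Suc m \<le> n"
      and I: "game_inv N ?one ?one ?zero ?one (2 * 2^m) ((\<lambda>y. (v y, w y)) ` X)"
      unfolding P_def by simp_all
    have "present N ?one ?one a" using h(2) adI by simp
    then obtain b where "b \<in> adom k ?J"
      "game_inv N ?one ?one ?zero ?one (2^m) ((\<lambda>y. ((v(x := a)) y, (w(x := b)) y)) ` insert x X)"
      using game_inv_step[OF i1 i1 i0 i1 I fin c N, of a x] adJ by auto
    thus "\<exists>b\<in>adom k ?J. P m (v(x := a)) (w(x := b)) (insert x X)"
      using fin card_insert[OF fin c] unfolding P_def by blast
  next
    fix m v w X x b assume h: "P (Suc m) v w X" "b \<in> adom k ?J"
    hence fin: "finite X" and c: "card X + Suc m \<le> n"
      and I: "game_inv N ?one ?one ?zero ?one (2 * 2^m) ((\<lambda>y. (v y, w y)) ` X)"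
      unfolding P_def by simp_all
    have "present N ?zero ?one b" using h(2) adJ by simp
    then obtain a where "a \<in> adom k ?I"
      "game_inv N ?one ?one ?zero ?one (2^m) ((\<lambda>y. ((v(x := a)) y, (w(x := b)) y)) ` insert x X)"
      using game_inv_step_back[OF i1 i1 i0 i1 I fin c N, of b x] adI by auto
    thus "\<exists>a\<in>adom k ?I. P m (v(x := a)) (w(x := b)) (insert x X)"
      using fin card_insert[OF fin c] unfolding P_def by blast
  next
    show "P n (\<lambda>_. 0) (\<lambda>_. 0) {}" unfolding P_def game_inv_def by simp
  qed (use depth sentence in simp_all)
  thus ?thesis unfolding models_def .
qed

lemma not_certainty_fo_expressible_two_inconsistent:
  assumes pq: "p < q" and qk: "q < k" and "incons p" "incons q"
  shows "\<not> certainty_fo_expressible k incons"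
proof
  assume "certainty_fo_expressible k incons"
  then obtain \<phi> where fs: "fo_sentence k \<phi>"
    and eqv: "\<forall>I. legal_inst k incons I \<longrightarrow> (certain k I \<longleftrightarrow> models k I \<phi>)"
    unfolding certainty_fo_expressible_def by blast
  define n where "n = qdepth \<phi>"
  define N where "N = (2 * 2^n + 2) * (n + 3)"
  have "(2::nat) * 3 \<le> (2 * 2^n + 2) * (n + 3)" by (intro mult_le_mono) auto
  hence N3: "3 \<le> N" unfolding N_def by simp
  have pk: "p < k" and pq': "p \<noteq> q" using pq qk by auto
  have "fv \<phi> = {}" using fs unfolding fo_sentence_def by simp
  hence agree: "models k (ladder k p q N (\<lambda>c. c = 1) (\<lambda>c. c = 1)) \<phi> \<longleftrightarrow>
      models k (ladder k p q N (\<lambda>c. c = 0) (\<lambda>c. c = 1)) \<phi>"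
    using ladders_agree_on_sentences[OF pk qk pq'] unfolding n_def N_def by blast
  have expresses: "certain k (ladder k p q N lend rend) \<longleftrightarrow> models k (ladder k p q N lend rend) \<phi>"
    for lend rend using eqv legal_inst_ladder[OF pk qk pq' assms(3,4)] by blast
  show False
    using agree expresses certain_closed_ladder[OF pq qk N3] not_certain_open_ladder[OF pq qk]
    by blast
qed

theorem proposition4p5:
  fixes k :: nat and incons :: "nat \<Rightarrow> bool"
  assumes "k \<ge> 2"
  shows "certainty_fo_expressible k incons \<longleftrightarrow> card {i. i < k \<and> incons i} \<le> 1"
proof -
  have at_most_one: "card {i. i < k \<and> incons i} \<le> 1 \<longleftrightarrow>
      (\<forall>a<k. \<forall>b<k. incons a \<longrightarrow> incons b \<longrightarrow> a = b)"
    using card_le_Suc0_iff_eq[of "{i. i < k \<and> incons i}"] by auto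
  show ?thesis
    unfolding at_most_one
  proof (intro iffI allI impI)
    fix a b assume "certainty_fo_expressible k incons" "a < k" "b < k" "incons a" "incons b"
    thus "a = b" using not_certainty_fo_expressible_two_inconsistent linorder_neqE_nat by metis
  next
    assume unique: "\<forall>a<k. \<forall>b<k. incons a \<longrightarrow> incons b \<longrightarrow> a = b"
    obtain j where "j < k" "\<forall>i<k. i \<noteq> j \<longrightarrow> \<not> incons i"
    proof (cases "\<exists>j<k. incons j")
      case True
      thus ?thesis using that unique by blast
    next
      case False
      thus ?thesis using that[of 0] \<open>k \<ge> 2\<close> by auto
    qed
    thus "certainty_fo_expressible k incons"
      using certainty_fo_expressible_one_inconsistent[OF \<open>k \<ge> 2\<close>] by blast
  qed
qed

end
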